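(* Let $G=(V,E)$ be a graph with arboricity $\alpha$, let $h\le\log\alpha$, and consider Procedure Arboricity Edge-Coloring$(G,h)$. For every $0\le i\le h$, the arboricity $\alpha^{(i)}$ of any graph $G^{(i)}$ computed after $i$ levels of recursion of the invocation of Procedure Oriented Edge-Coloring inside Arboricity Edge-Coloring satisfies $\alpha^{(i)}\le\frac{\alpha}{2^{i-1}}+1$.
   Context: Logarithms are base 2. The arboricity of a graph $H$ is $\max_{S\subseteq V(H),|S|\ge2}\lceil |E(H[S])|/(|S|-1)\rceil$. An oriented degree-splitting of $(H,\mu)$ with discrepancy $\kappa$ is a partition $(E_1,E_2)$ of $E(H)$ such that for every vertex $v$, the numbers of incoming edges of $v$ in $E_1$ and in $E_2$ differ by at most $\kappa$, and likewise for outgoing edges. Procedure Forests-Decomposition Orientation$(G)$: starting from $\mathcal A=V$, repeatedly pick $v\in\mathcal A$ of minimum degree in $G[\mathcal A]$, orient every edge from $v$ to its neighbours in $\mathcal A$, and remove $v$ from $\mathcal A$, until $\mathcal A=\emptyset$ (the resulting orientation has out-degree at most $2\alpha$). Procedure Oriented Edge-Coloring$(H,\mu,h)$: if $h=0$, return a proper $(\Delta(H)+1)$-edge-coloring of $H$ from a base-case subroutine; otherwise compute an oriented degree-splitting $(E_1,E_2)$ of $(H,\mu)$ with discrepancy at most 1, recursively call Oriented Edge-Coloring$(H_1,\mu,h-1)$ and Oriented Edge-Coloring$(H_2,\mu,h-1)$ on $H_1=(V,E_1)$, $H_2=(V,E_2)$ (orientation induced by $\mu$), and merge the colorings using disjoint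 palettes. Procedure Arboricity Edge-Coloring$(G,h)$: compute $\mu=$ Forests-Decomposition Orientation$(G)$ and return Oriented Edge-Coloring$(G,\mu,h)$. $G^{(0)}=G$, and a graph computed after $i$ levels of recursion is any $H_1$ or $H_2$ produced from a graph computed after $i-1$ levels. *)

theory Defs
  imports Complex_Main
begin

definition graph :: "'a set \<Rightarrow> 'a set set \<Rightarrow> bool" where
  "graph V E \<longleftrightarrow> finite V \<and> (\<forall>e\<in>E. e \<subseteq> V \<and> card e = 2)"

definition arboricity :: "'a set \<Rightarrow> 'a set set \<Rightarrow> nat" where
  "arboricity V E = Max (insert 0
     {nat \<lceil>real (card {e\<in>E. e \<subseteq> S}) / real (card S - 1)\<rceil> | S. S \<subseteq> V \<and> card S \<ge> 2})"

definition deg_in :: "'a set set \<Rightarrow> 'a set \<Rightarrow> 'a \<Rightarrow> nat" where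
  "deg_in E A v = card {u\<in>A. {v, u} \<in> E}"

text \<open>A run of Procedure Forests-Decomposition Orientation: the sequence vs of removed
  vertices, each of minimum degree in G[A] at the time of removal.\<close>
definition fd_run :: "'a set \<Rightarrow> 'a set set \<Rightarrow> 'a list \<Rightarrow> bool" where
  "fd_run V E vs \<longleftrightarrow> distinct vs \<and> set vs = V \<and>
     (\<forall>k<length vs. let A = V - set (take k vs) in
        \<forall>w\<in>A. deg_in E A (vs ! k) \<le> deg_in E A w)"

definition fd_orientation :: "'a set set \<Rightarrow> 'a list \<Rightarrow> ('a \<times> 'a) set" where
  "fd_orientation E vs = {(vs ! j, vs ! k) | j k. j < k \<and> k < length vs \<and> {vs ! j, vs ! k} \<in> E}"

definition in_deg :: "('a \<times> 'a) set \<Rightarrow> 'a set set \<Rightarrow> 'a \<Rightarrow> nat" where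
  "in_deg \<mu> F v = card {u. (u, v) \<in> \<mu> \<and> {u, v} \<in> F}"

definition out_deg :: "('a \<times> 'a) set \<Rightarrow> 'a set set \<Rightarrow> 'a \<Rightarrow> nat" where
  "out_deg \<mu> F v = card {u. (v, u) \<in> \<mu> \<and> {v, u} \<in> F}"

definition oriented_splitting ::
  "'a set \<Rightarrow> 'a set set \<Rightarrow> ('a \<times> 'a) set \<Rightarrow> 'a set set \<Rightarrow> 'a set set \<Rightarrow> nat \<Rightarrow> bool" where
  "oriented_splitting V H \<mu> E1 E2 \<kappa> \<longleftrightarrow> E1 \<union> E2 = H \<and> E1 \<inter> E2 = {} \<and>
     (\<forall>v\<in>V. \<bar>int (in_deg \<mu> E1 v) - int (in_deg \<mu> E2 v)\<bar> \<le> int \<kappa> \<and>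
             \<bar>int (out_deg \<mu> E1 v) - int (out_deg \<mu> E2 v)\<bar> \<le> int \<kappa>)"

text \<open>Edge sets of graphs computed after i levels of recursion of Oriented Edge-Coloring
  (all on vertex set V, orientation induced by mu).\<close>
inductive level_graph :: "'a set \<Rightarrow> 'a set set \<Rightarrow> ('a \<times> 'a) set \<Rightarrow> nat \<Rightarrow> 'a set set \<Rightarrow> bool"
  for V E \<mu> where
  base: "level_graph V E \<mu> 0 E"
| left: "level_graph V E \<mu> i H \<Longrightarrow> oriented_splitting V H \<mu> E1 E2 1 \<Longrightarrow>
         level_graph V E \<mu> (Suc i) E1"
| right: "level_graph V E \<mu> i H \<Longrightarrow> oriented_splitting V H \<mu> E1 E2 1 \<Longrightarrow>
         level_graph V E \<mu> (Suc i) E2"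

end

theory Submission
  imports Defs
begin

text \<open>When a vertex v is removed from A, its out-neighbours under \<mu> lie in A, so its out-degree is
  at most its minimum degree in G[A], which is at most 2|E(G[A])|/|A| \<le> 2\<alpha>. Conversely, in any
  vertex set S the vertex removed last is a sink, so every edge inside S leaves one of the other
  |S| - 1 vertices: a subgraph in which \<mu> has out-degree at most d has arboricity at most d.
  A splitting with discrepancy 1 turns out-degree d into at most (d + 1)/2, so after i levels the
  out-degree, and with it the arboricity, is at most \<lceil>2\<alpha>/2^i\<rceil> \<le> \<alpha>/2^(i-1) + 1.\<close>

lemma graph_finite_edges:
  assumes "graph V E"
  shows "finite E"
proof -
  have "E \<subseteq> Pow V" "finite V" using assms by (auto simp: graph_def)
  then show ?thesis by (meson finite_Pow_iff finite_subset)
qed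

lemma finite_arboricity_ratios:
  assumes "finite V"
  shows "finite {nat \<lceil>real (card {e\<in>E. e \<subseteq> S}) / real (card S - 1)\<rceil> | S. S \<subseteq> V \<and> card S \<ge> 2}"
  using assms by (intro finite_image_set) simp

lemma nat_ceiling_divide_le_iff:
  fixes c s d :: nat
  assumes "s > 0"
  shows "nat \<lceil>real c / real s\<rceil> \<le> d \<longleftrightarrow> c \<le> d * s"
proof -
  have "nat \<lceil>real c / real s\<rceil> \<le> d \<longleftrightarrow> real c / real s \<le> real d"
    by (simp add: nat_le_iff ceiling_le_iff)
  also have "\<dots> \<longleftrightarrow> real c \<le> real d * real s"
    using assms by (simp add: pos_divide_le_eq)
  also have "\<dots> \<longleftrightarrow> c \<le> d * s"
    by (metis of_nat_le_iff of_nat_mult)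
  finally show ?thesis .
qed

lemma card_induced_edges_le_arboricity:
  assumes "graph V E" "S \<subseteq> V"
  shows "card {e\<in>E. e \<subseteq> S} \<le> arboricity V E * (card S - 1)"
proof (cases "card S \<ge> 2")
  case True
  have "finite V" using assms(1) by (simp add: graph_def)
  then have "finite (insert 0
      {nat \<lceil>real (card {e\<in>E. e \<subseteq> S}) / real (card S - 1)\<rceil> | S. S \<subseteq> V \<and> card S \<ge> 2})"
    by (simp add: finite_arboricity_ratios)
  moreover have "nat \<lceil>real (card {e\<in>E. e \<subseteq> S}) / real (card S - 1)\<rceil>
      \<in> {nat \<lceil>real (card {e\<in>E. e \<subseteq> S}) / real (card S - 1)\<rceil> | S. S \<subseteq> V \<and> card S \<ge> 2}"
    using True assms(2) by blast
  ultimately have "nat \<lceil>real (card {e\<in>E. e \<subseteq> S}) / real (card S - 1)\<rceil> \<le> arboricity V E"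
    unfolding arboricity_def by (blast intro: Max_ge)
  moreover have "card S - 1 > 0" using True by simp
  ultimately show ?thesis by (simp only: nat_ceiling_divide_le_iff)
next
  case False
  have "finite S" using assms by (meson graph_def finite_subset)
  then have "e \<notin> E" if "e \<subseteq> S" for e
    using False assms(1) that card_mono[of S e] by (auto simp: graph_def)
  then have "{e\<in>E. e \<subseteq> S} = {}" by blast
  then show ?thesis by (metis card.empty le0)
qed

lemma arboricity_leI:
  assumes "finite V"
    and "\<And>S. S \<subseteq> V \<Longrightarrow> card S \<ge> 2 \<Longrightarrow> card {e\<in>E. e \<subseteq> S} \<le> d * (card S - 1)"
  shows "arboricity V E \<le> d"
proof -
  have "nat \<lceil>real (card {e\<in>E. e \<subseteq> S}) / real (card S - 1)\<rceil> \<le> d"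
    if "S \<subseteq> V" "card S \<ge> 2" for S
  proof -
    have "card S - 1 > 0" using that(2) by simp
    then show ?thesis using assms(2)[OF that] by (simp only: nat_ceiling_divide_le_iff)
  qed
  then show ?thesis
    unfolding arboricity_def using finite_arboricity_ratios[OF assms(1)] by (auto simp: Max_le_iff)
qed

lemma sum_deg_in_le_card_edges:
  assumes "finite A" "\<forall>e\<in>E. card e = 2"
  shows "(\<Sum>w\<in>A. deg_in E A w) \<le> 2 * card {e\<in>E. e \<subseteq> A}"
proof -
  let ?EA = "{e\<in>E. e \<subseteq> A}"
  have fin: "finite ?EA" using assms(1) by (rule rev_finite_subset[OF finite_Pow_iff[THEN iffD2]]) auto
  have "deg_in E A w \<le> card {e\<in>?EA. w \<in> e}" if "w \<in> A" for w
  proof -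
    have "inj_on (\<lambda>u. {w, u}) {u\<in>A. {w, u} \<in> E}" by (auto simp: inj_on_def doubleton_eq_iff)
    moreover have "(\<lambda>u. {w, u}) ` {u\<in>A. {w, u} \<in> E} \<subseteq> {e\<in>?EA. w \<in> e}"
      using that by auto
    moreover have "finite {e\<in>?EA. w \<in> e}" by (rule finite_subset[OF _ fin]) blast
    ultimately show ?thesis unfolding deg_in_def by (rule card_inj_on_le)
  qed
  then have "(\<Sum>w\<in>A. deg_in E A w) \<le> (\<Sum>w\<in>A. card {e\<in>?EA. w \<in> e})"
    by (rule sum_mono)
  also have "\<dots> = 2 * card ?EA"
  proof (rule sum_multicount[OF assms(1) fin])
    have "{w\<in>A. w \<in> e} = e" if "e \<subseteq> A" for e using that by blast
    then show "\<forall>e\<in>?EA. card {w\<in>A. w \<in> e} = 2" using assms(2) by auto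
  qed
  finally show ?thesis .
qed

lemma min_deg_in_le_twice_arboricity:
  assumes "graph V E" "A \<subseteq> V" "v \<in> A" "\<forall>w\<in>A. deg_in E A v \<le> deg_in E A w"
  shows "deg_in E A v \<le> 2 * arboricity V E"
proof -
  have fin: "finite A" using assms(1,2) by (meson graph_def finite_subset)
  have "card A * deg_in E A v \<le> (\<Sum>w\<in>A. deg_in E A w)"
    using sum_mono[of A "\<lambda>_. deg_in E A v" "deg_in E A"] assms(4) by simp
  also have "\<dots> \<le> 2 * card {e\<in>E. e \<subseteq> A}"
    using fin assms(1) by (intro sum_deg_in_le_card_edges) (auto simp: graph_def)
  also have "\<dots> \<le> 2 * (arboricity V E * (card A - 1))"
    using card_induced_edges_le_arboricity[OF assms(1,2)] by simp
  also have "\<dots> \<le> card A * (2 * arboricity V E)"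
    by (simp add: algebra_simps)
  finally have "card A * deg_in E A v \<le> card A * (2 * arboricity V E)" .
  moreover have "card A > 0" using assms(3) fin card_gt_0_iff by blast
  ultimately show ?thesis by simp
qed

lemma finite_out_neighbours:
  assumes "finite F"
  shows "finite {u. (v, u) \<in> \<mu> \<and> {v, u} \<in> F}"
proof (rule finite_subset)
  show "finite ((\<lambda>u. {v, u}) -` F)"
    using assms by (rule finite_vimageI) (auto simp: inj_on_def doubleton_eq_iff)
qed auto

lemma card_induced_edges_le_out_deg:
  assumes "finite H" "finite S" "v\<^sub>0 \<in> S" "\<forall>u\<in>S. (v\<^sub>0, u) \<notin> \<mu>"
    and oriented: "\<forall>e\<in>H. e \<subseteq> S \<longrightarrow> (\<exists>a b. e = {a, b} \<and> (a, b) \<in> \<mu>)"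
    and "\<forall>v\<in>S. out_deg \<mu> H v \<le> d"
  shows "card {e\<in>H. e \<subseteq> S} \<le> d * (card S - 1)"
proof -
  define N where "N v = {u. (v, u) \<in> \<mu> \<and> {v, u} \<in> H}" for v
  have "{e\<in>H. e \<subseteq> S} \<subseteq> (\<Union>v\<in>S - {v\<^sub>0}. (\<lambda>u. {v, u}) ` N v)"
  proof
    fix e assume "e \<in> {e\<in>H. e \<subseteq> S}"
    with oriented obtain a b where "e = {a, b}" "(a, b) \<in> \<mu>" "e \<in> H" "e \<subseteq> S" by blast
    with assms(4) have "a \<in> S - {v\<^sub>0}" "b \<in> N a" unfolding N_def by auto
    with \<open>e = {a, b}\<close> show "e \<in> (\<Union>v\<in>S - {v\<^sub>0}. (\<lambda>u. {v, u}) ` N v)" by blast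
  qed
  moreover have "finite (\<Union>v\<in>S - {v\<^sub>0}. (\<lambda>u. {v, u}) ` N v)"
    using assms(2) finite_out_neighbours[OF assms(1)] unfolding N_def by simp
  ultimately have "card {e\<in>H. e \<subseteq> S} \<le> card (\<Union>v\<in>S - {v\<^sub>0}. (\<lambda>u. {v, u}) ` N v)"
    by (rule card_mono[rotated])
  also have "\<dots> \<le> (\<Sum>v\<in>S - {v\<^sub>0}. card ((\<lambda>u. {v, u}) ` N v))"
    using assms(2) by (intro card_UN_le) simp
  also have "\<dots> \<le> (\<Sum>v\<in>S - {v\<^sub>0}. d)"
  proof (rule sum_mono)
    fix v assume "v \<in> S - {v\<^sub>0}"
    then have "card (N v) \<le> d" using assms(6) unfolding N_def out_deg_def by auto
    moreover have "finite (N v)" unfolding N_def using finite_out_neighbours[OF assms(1)] .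
    ultimately show "card ((\<lambda>u. {v, u}) ` N v) \<le> d" using card_image_le le_trans by blast
  qed
  also have "\<dots> = d * (card S - 1)" using assms(2,3) by simp
  finally show ?thesis .
qed

lemma fd_orientation_arc_to_later:
  assumes "distinct vs" "k < length vs" "(vs ! k, u) \<in> fd_orientation E vs"
  shows "\<exists>k'. k < k' \<and> k' < length vs \<and> u = vs ! k' \<and> {vs ! k, u} \<in> E"
proof -
  from assms(3) obtain j k' where "vs ! k = vs ! j" "u = vs ! k'" "j < k'" "k' < length vs"
    "{vs ! j, vs ! k'} \<in> E"
    unfolding fd_orientation_def by auto
  moreover from this have "j = k" using assms(1,2) nth_eq_iff_index_eq by (metis order.strict_trans)
  ultimately show ?thesis by auto
qed

lemma fd_orientation_orients_edge:
  assumes "e \<in> E" "card e = 2" "e \<subseteq> set vs"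
  shows "\<exists>a b. e = {a, b} \<and> (a, b) \<in> fd_orientation E vs"
proof -
  obtain x y where e: "e = {x, y}" "x \<noteq> y" using card_2_iff assms(2) by metis
  with assms(3) obtain j k where jk: "j < length vs" "x = vs ! j" "k < length vs" "y = vs ! k"
    by (metis in_set_conv_nth insert_subset)
  have arc: "(vs ! j', vs ! k') \<in> fd_orientation E vs"
    if "j' < k'" "k' < length vs" "{vs ! j', vs ! k'} \<in> E" for j' k'
    using that unfolding fd_orientation_def by blast
  from e jk have "j < k \<or> k < j" by (metis linorder_neqE_nat)
  then show ?thesis
  proof
    assume "j < k"
    then show ?thesis using arc assms(1) e jk by blast
  next
    assume "k < j"
    then have "(y, x) \<in> fd_orientation E vs" using arc assms(1) e jk by (simp add: insert_commute)
    then show ?thesis using e(1) by (blast intro: insert_commute)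
  qed
qed

lemma fd_orientation_has_sink:
  assumes "distinct vs" "S \<subseteq> set vs" "S \<noteq> {}"
  obtains v where "v \<in> S" "\<forall>u\<in>S. (v, u) \<notin> fd_orientation E vs"
proof -
  define K where "K = {k. k < length vs \<and> vs ! k \<in> S}"
  have "finite K" unfolding K_def by simp
  moreover have "K \<noteq> {}" using assms(2,3) unfolding K_def by (metis empty_Collect_eq in_set_conv_nth subset_iff ex_in_conv)
  ultimately have last: "Max K \<in> K" by simp
  have "(vs ! Max K, u) \<notin> fd_orientation E vs" if "u \<in> S" for u
  proof
    assume "(vs ! Max K, u) \<in> fd_orientation E vs"
    then obtain k' where "Max K < k'" "k' < length vs" "u = vs ! k'"
      using fd_orientation_arc_to_later[OF assms(1)] last unfolding K_def by blast
    with that \<open>finite K\<close> show False unfolding K_def by (metis (mono_tags) Max_ge leD mem_Collect_eq)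
  qed
  with last show ?thesis using that unfolding K_def by blast
qed

lemma out_deg_fd_orientation_le:
  assumes "graph V E" "fd_run V E vs" "v \<in> V"
  shows "out_deg (fd_orientation E vs) E v \<le> 2 * arboricity V E"
proof -
  have dist: "distinct vs" and set_vs: "set vs = V" using assms(2) by (auto simp: fd_run_def)
  obtain k where k: "k < length vs" "vs ! k = v" using assms(3) set_vs by (metis in_set_conv_nth)
  define A where "A = V - set (take k vs)"
  have "V = set (take k vs) \<union> set (drop k vs)" using set_vs by (metis append_take_drop_id set_append)
  then have A_drop: "A = set (drop k vs)"
    using set_take_disj_set_drop_if_distinct[OF dist, of k k] unfolding A_def by blast
  have "A \<subseteq> V" by (auto simp: A_def)
  have later: "vs ! k' \<in> A" if "k \<le> k'" "k' < length vs" for k'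
  proof -
    have "drop k vs ! (k' - k) = vs ! k'" "k' - k < length (drop k vs)" using that by simp_all
    then show ?thesis unfolding A_drop by (metis nth_mem)
  qed
  have "v \<in> A" using later k by blast
  have "{u. (v, u) \<in> fd_orientation E vs \<and> {v, u} \<in> E} \<subseteq> {u\<in>A. {v, u} \<in> E}"
  proof
    fix u assume "u \<in> {u. (v, u) \<in> fd_orientation E vs \<and> {v, u} \<in> E}"
    then obtain k' where "k < k'" "k' < length vs" "u = vs ! k'" "{v, u} \<in> E"
      using fd_orientation_arc_to_later[OF dist k(1)] k(2) by blast
    then show "u \<in> {u\<in>A. {v, u} \<in> E}" using later by simp
  qed
  moreover have "finite {u\<in>A. {v, u} \<in> E}" unfolding A_drop by simp
  ultimately have "out_deg (fd_orientation E vs) E v \<le> deg_in E A v"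
    unfolding out_deg_def deg_in_def by (intro card_mono)
  also have "\<dots> \<le> 2 * arboricity V E"
    using assms(2) k \<open>A \<subseteq> V\<close> \<open>v \<in> A\<close>
    by (intro min_deg_in_le_twice_arboricity[OF assms(1)]) (auto simp: fd_run_def A_def Let_def)
  finally show ?thesis .
qed

lemma arboricity_le_fd_out_deg:
  assumes "graph V E" "H \<subseteq> E" "distinct vs" "set vs = V"
    and "\<forall>v\<in>V. out_deg (fd_orientation E vs) H v \<le> d"
  shows "arboricity V H \<le> d"
proof (rule arboricity_leI)
  show "finite V" using assms(1) by (simp add: graph_def)
  fix S assume S: "S \<subseteq> V" "card S \<ge> 2"
  then have "S \<noteq> {}" "finite S" using card_gt_0_iff by fastforce+
  then obtain v\<^sub>0 where "v\<^sub>0 \<in> S" "\<forall>u\<in>S. (v\<^sub>0, u) \<notin> fd_orientation E vs"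
    using fd_orientation_has_sink[OF assms(3)] S(1) assms(4) by metis
  moreover have "finite H" using graph_finite_edges[OF assms(1)] assms(2) by (rule finite_subset[rotated])
  moreover have "\<forall>e\<in>H. e \<subseteq> S \<longrightarrow> (\<exists>a b. e = {a, b} \<and> (a, b) \<in> fd_orientation E vs)"
    using assms(1,2,4) S(1) by (auto simp: graph_def intro!: fd_orientation_orients_edge)
  ultimately show "card {e\<in>H. e \<subseteq> S} \<le> d * (card S - 1)"
    using \<open>finite S\<close> assms(5) S(1) by (intro card_induced_edges_le_out_deg) auto
qed

lemma out_deg_Un_disjoint:
  assumes "finite (F\<^sub>1 \<union> F\<^sub>2)" "F\<^sub>1 \<inter> F\<^sub>2 = {}"
  shows "out_deg \<mu> (F\<^sub>1 \<union> F\<^sub>2) v = out_deg \<mu> F\<^sub>1 v + out_deg \<mu> F\<^sub>2 v"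
proof -
  define N where "N F = {u. (v, u) \<in> \<mu> \<and> {v, u} \<in> F}" for F
  have "N (F\<^sub>1 \<union> F\<^sub>2) = N F\<^sub>1 \<union> N F\<^sub>2" "N F\<^sub>1 \<inter> N F\<^sub>2 = {}"
    using assms(2) unfolding N_def by blast+
  moreover have "finite (N F\<^sub>1)" "finite (N F\<^sub>2)"
    using assms(1) unfolding N_def by (simp_all add: finite_out_neighbours)
  ultimately have "card (N (F\<^sub>1 \<union> F\<^sub>2)) = card (N F\<^sub>1) + card (N F\<^sub>2)"
    by (simp add: card_Un_disjoint)
  then show ?thesis unfolding N_def out_deg_def .
qed

lemma out_deg_oriented_splitting:
  assumes "oriented_splitting V H \<mu> E\<^sub>1 E\<^sub>2 \<kappa>" "finite H" "v \<in> V"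
  shows "2 * out_deg \<mu> E\<^sub>1 v \<le> out_deg \<mu> H v + \<kappa>" "2 * out_deg \<mu> E\<^sub>2 v \<le> out_deg \<mu> H v + \<kappa>"
proof -
  have "H = E\<^sub>1 \<union> E\<^sub>2" "E\<^sub>1 \<inter> E\<^sub>2 = {}"
    and "\<bar>int (out_deg \<mu> E\<^sub>1 v) - int (out_deg \<mu> E\<^sub>2 v)\<bar> \<le> int \<kappa>"
    using assms(1,3) unfolding oriented_splitting_def by auto
  moreover from this have "out_deg \<mu> H v = out_deg \<mu> E\<^sub>1 v + out_deg \<mu> E\<^sub>2 v"
    using assms(2) by (simp add: out_deg_Un_disjoint)
  ultimately show "2 * out_deg \<mu> E\<^sub>1 v \<le> out_deg \<mu> H v + \<kappa>" "2 * out_deg \<mu> E\<^sub>2 v \<le> out_deg \<mu> H v + \<kappa>"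
    by linarith+
qed

lemma level_graph_subset:
  assumes "level_graph V E \<mu> i H"
  shows "H \<subseteq> E"
  using assms by induction (auto simp: oriented_splitting_def)

lemma level_graph_out_deg:
  assumes "finite E" "level_graph V E \<mu> i H" "\<And>v. v \<in> V \<Longrightarrow> out_deg \<mu> E v \<le> D" "v \<in> V"
  shows "2 ^ i * out_deg \<mu> H v \<le> D + 2 ^ i - 1"
proof -
  have halve: "2 ^ Suc i * x \<le> D + 2 ^ Suc i - 1"
    if "2 * x \<le> y + 1" "2 ^ i * y \<le> D + 2 ^ i - 1" for i x y :: nat
  proof -
    have "2 ^ Suc i * x = 2 ^ i * (2 * x)" by simp
    also have "\<dots> \<le> 2 ^ i * y + 2 ^ i" using that(1) by (metis distrib_left mult.right_neutral mult_le_mono2)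
    finally show ?thesis using that(2) by simp
  qed
  from assms(2) show ?thesis
  proof induction
    case base
    then show ?case using assms(3,4) by simp
  next
    case (left i H E\<^sub>1 E\<^sub>2)
    have "finite H" using finite_subset[OF level_graph_subset[OF left(1)] assms(1)] .
    then show ?case using halve out_deg_oriented_splitting(1)[OF left(2) _ assms(4)] left(3) by blast
  next
    case (right i H E\<^sub>1 E\<^sub>2)
    have "finite H" using finite_subset[OF level_graph_subset[OF right(1)] assms(1)] .
    then show ?case using halve out_deg_oriented_splitting(2)[OF right(2) _ assms(4)] right(3) by blast
  qed
qed

lemma div_power2_round_up_le:
  fixes a i :: nat
  shows "real ((2 * a + 2 ^ i - 1) div 2 ^ i) \<le> real a / 2 powr (real i - 1) + 1"
proof -
  have "real ((2 * a + 2 ^ i - 1) div 2 ^ i) \<le> real (2 * a + 2 ^ i - 1) / 2 ^ i"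
    using of_nat_div_le_of_nat[where 'a = real, of "2 * a + 2 ^ i - 1" "2 ^ i"] by simp
  also have "\<dots> = (2 * real a + 2 ^ i - 1) / 2 ^ i"
  proof -
    have "(1::nat) \<le> 2 * a + 2 ^ i" using one_le_power[of "2::nat" i] by linarith
    then show ?thesis by (simp add: of_nat_diff)
  qed
  also have "\<dots> = 2 * real a / 2 ^ i + 1 - 1 / 2 ^ i"
    by (simp add: diff_divide_distrib add_divide_distrib)
  also have "\<dots> \<le> 2 * real a / 2 ^ i + 1"
    by simp
  also have "2 * real a / 2 ^ i = real a / 2 powr (real i - 1)"
    by (simp add: powr_diff powr_realpow)
  finally show ?thesis .
qed

theorem lemma4p10:
  fixes V :: "'a set" and E :: "'a set set" and vs :: "'a list" and h i :: nat and H :: "'a set set"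
  assumes "graph V E"
    and "real h \<le> log 2 (real (arboricity V E))"
    and "fd_run V E vs"
    and "i \<le> h"
    and "level_graph V E (fd_orientation E vs) i H"
  shows "real (arboricity V H) \<le> real (arboricity V E) / 2 powr (real i - 1) + 1"
proof -
  let ?\<alpha> = "arboricity V E"
  define d where "d = (2 * ?\<alpha> + 2 ^ i - 1) div 2 ^ i"
  have "out_deg (fd_orientation E vs) H v \<le> d" if "v \<in> V" for v
  proof -
    have "2 ^ i * out_deg (fd_orientation E vs) H v \<le> 2 * ?\<alpha> + 2 ^ i - 1"
      using graph_finite_edges[OF assms(1)] assms(5) out_deg_fd_orientation_le[OF assms(1,3)] that
      by (rule level_graph_out_deg)
    then show ?thesis unfolding d_def by (simp add: less_eq_div_iff_mult_less_eq mult.commute)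
  qed
  moreover have "distinct vs" "set vs = V" using assms(3) by (auto simp: fd_run_def)
  ultimately have "arboricity V H \<le> d"
    using arboricity_le_fd_out_deg[OF assms(1) level_graph_subset[OF assms(5)]] by blast
  then show ?thesis
    unfolding d_def using div_power2_round_up_le[of ?\<alpha> i] by linarith
qed

end
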